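(* If $\Gamma$ is a mutation-finite connected graph with at least $4$ vertices, then $\Gamma$ does not contain $\mathbf{Z}_3$ as a subgraph.
   Context: A graph here is a finite directed multigraph with no loops and no oriented $2$-cycles; multiple arrows in the same direction are allowed. The mutation $\mu_k\Gamma$ at a vertex $k$: for every pair of arrows $i\to k$, $k\to j$ add an arrow $i\to j$; reverse all arrows incident to $k$; then delete pairs of opposite arrows $i\to j$, $j\to i$ until no oriented $2$-cycles remain. $\Gamma$ is mutation-finite if only finitely many isomorphism classes of graphs are obtainable from it by sequences of mutations. Connected means the underlying undirected graph is connected. Subgraph always means full (induced) subgraph: a subset of the vertices together with all arrows between them. $\mathbf{Z}_3$ is the graph with three vertices $x_1,x_2,x_3$ and exactly two arrows $x_1\to x_2$, two arrows $x_2\to x_3$, and two arrows $x_3\to x_1$. *)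

theory Defs
  imports Main
begin

text \<open>A graph on a finite vertex set V is given by an arrow-count function
  b, where b i j is the number of arrows i -> j (values outside V are irrelevant).\<close>

definition is_graph :: "'v set \<Rightarrow> ('v \<Rightarrow> 'v \<Rightarrow> nat) \<Rightarrow> bool" where
  "is_graph V b \<longleftrightarrow> finite V \<and> (\<forall>i\<in>V. b i i = 0) \<and>
     (\<forall>i\<in>V. \<forall>j\<in>V. b i j = 0 \<or> b j i = 0)"

text \<open>Mutation at k: add i->j for each path i->k->j, reverse arrows at k,
  cancel opposite pairs.\<close>
definition mutate :: "'v \<Rightarrow> ('v \<Rightarrow> 'v \<Rightarrow> nat) \<Rightarrow> ('v \<Rightarrow> 'v \<Rightarrow> nat)" where
  "mutate k b = (\<lambda>i j.
     if i = k then b j k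
     else if j = k then b k i
     else nat ((int (b i j) + int (b i k * b k j)) - (int (b j i) + int (b j k * b k i))))"

inductive_set mut_class :: "'v set \<Rightarrow> ('v \<Rightarrow> 'v \<Rightarrow> nat) \<Rightarrow> ('v \<Rightarrow> 'v \<Rightarrow> nat) set"
  for V b where
  refl: "b \<in> mut_class V b"
| step: "c \<in> mut_class V b \<Longrightarrow> k \<in> V \<Longrightarrow> mutate k c \<in> mut_class V b"

definition graph_iso :: "'v set \<Rightarrow> ('v \<Rightarrow> 'v \<Rightarrow> nat) \<Rightarrow> ('v \<Rightarrow> 'v \<Rightarrow> nat) \<Rightarrow> bool" where
  "graph_iso V b c \<longleftrightarrow> (\<exists>f. bij_betw f V V \<and> (\<forall>i\<in>V. \<forall>j\<in>V. c (f i) (f j) = b i j))"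

definition mutation_finite :: "'v set \<Rightarrow> ('v \<Rightarrow> 'v \<Rightarrow> nat) \<Rightarrow> bool" where
  "mutation_finite V b \<longleftrightarrow>
     (\<exists>S. finite S \<and> (\<forall>c\<in>mut_class V b. \<exists>d\<in>S. graph_iso V d c))"

definition graph_connected :: "'v set \<Rightarrow> ('v \<Rightarrow> 'v \<Rightarrow> nat) \<Rightarrow> bool" where
  "graph_connected V b \<longleftrightarrow>
     (\<forall>x\<in>V. \<forall>y\<in>V. (x, y) \<in> {(u, w). u \<in> V \<and> w \<in> V \<and> (b u w > 0 \<or> b w u > 0)}\<^sup>*)"

definition contains_Z3 :: "'v set \<Rightarrow> ('v \<Rightarrow> 'v \<Rightarrow> nat) \<Rightarrow> bool" where
  "contains_Z3 V b \<longleftrightarrow> (\<exists>x1\<in>V. \<exists>x2\<in>V. \<exists>x3\<in>V. x1 \<noteq> x2 \<and> x2 \<noteq> x3 \<and> x1 \<noteq> x3 \<and>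
     b x1 x2 = 2 \<and> b x2 x3 = 2 \<and> b x3 x1 = 2 \<and>
     b x2 x1 = 0 \<and> b x3 x2 = 0 \<and> b x1 x3 = 0)"

end

theory Submission
  imports Defs
begin

text \<open>A cyclic triangle whose edge weights p, q, r are all at least 2, but not all equal to 2,
  makes the mutation class infinite: mutating at the vertex opposite the lightest edge q gives
  the cyclic triangle with weights r, r p - q, p, where r p - q > q. So the total weight grows
  strictly and the step can be repeated forever, whereas mutation-finiteness bounds all arrow
  multiplicities. A cyclic triangle with one weight 1 and two weights at least 2 becomes such a
  triangle after one mutation.

  Since the graph is connected and has a fourth vertex, some vertex y outside a copy
  x1 -> x2 -> x3 of Z3 is joined to it. Up to rotating Z3, one of three cases holds: y -> x1 and
  there is no arrow x2 -> y; or x1 -> y and there is no arrow y -> x3; in either case one mutation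
  at x1 creates such a triangle through y. Otherwise y -> x1 -> x2 -> y is a cyclic triangle and
  y is not joined to x3. That triangle works directly, except for the weights (1, 2, 1) and
  (2, 2, 2), which need one and two further mutations respectively.\<close>

definition cyclic_triangle ::
  "('v \<Rightarrow> 'v \<Rightarrow> nat) \<Rightarrow> 'v \<Rightarrow> 'v \<Rightarrow> 'v \<Rightarrow> nat \<Rightarrow> nat \<Rightarrow> nat \<Rightarrow> bool" where
  "cyclic_triangle c u v w p q r \<longleftrightarrow> u \<noteq> v \<and> v \<noteq> w \<and> u \<noteq> w \<and>
     c u v = p \<and> c v w = q \<and> c w u = r \<and> c v u = 0 \<and> c w v = 0 \<and> c u w = 0"

lemma cyclic_triangle_rotate:
  "cyclic_triangle c u v w p q r \<Longrightarrow> cyclic_triangle c v w u q r p"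
  by (auto simp: cyclic_triangle_def)

lemma mutate_out: "mutate k c k j = c j k"
  by (simp add: mutate_def)

lemma mutate_in: "i \<noteq> k \<Longrightarrow> mutate k c i k = c k i"
  by (simp add: mutate_def)

lemma mutate_apart:
  "i \<noteq> k \<Longrightarrow> j \<noteq> k \<Longrightarrow>
    mutate k c i j = (c i j + c i k * c k j) - (c j i + c j k * c k i)"
  by (simp add: mutate_def nat_minus_as_int)

lemmas mutate_simps = mutate_out mutate_in mutate_apart

lemma mutate_cyclic_triangle:
  assumes "cyclic_triangle c u v w p q r" and "q \<le> r * p"
  shows "cyclic_triangle (mutate u c) u w v r (r * p - q) p"
  using assms by (auto simp: cyclic_triangle_def mutate_simps mult.commute)

definition heavy_triangle :: "'v set \<Rightarrow> ('v \<Rightarrow> 'v \<Rightarrow> nat) \<Rightarrow> nat \<Rightarrow> bool" where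
  "heavy_triangle V c n \<longleftrightarrow> (\<exists>u\<in>V. \<exists>v\<in>V. \<exists>w\<in>V. \<exists>p q r. cyclic_triangle c u v w p q r \<and>
     2 \<le> p \<and> 2 \<le> q \<and> 2 \<le> r \<and> 6 < p + q + r \<and> n \<le> p + q + r)"

lemma heavy_triangleI:
  "cyclic_triangle c u v w p q r \<Longrightarrow> u \<in> V \<Longrightarrow> v \<in> V \<Longrightarrow> w \<in> V \<Longrightarrow>
    2 \<le> p \<Longrightarrow> 2 \<le> q \<Longrightarrow> 2 \<le> r \<Longrightarrow> 6 < p + q + r \<Longrightarrow> n \<le> p + q + r \<Longrightarrow>
    heavy_triangle V c n"
  unfolding heavy_triangle_def by blast

lemma heavy_triangle_lightest_middle:
  assumes "heavy_triangle V c n"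
  obtains u v w p q r where "u \<in> V" "v \<in> V" "w \<in> V" "cyclic_triangle c u v w p q r"
    "2 \<le> q" "q \<le> p" "q \<le> r" "6 < p + q + r" "n \<le> p + q + r"
proof -
  from assms obtain u v w p q r where V: "u \<in> V" "v \<in> V" "w \<in> V"
    and tri: "cyclic_triangle c u v w p q r"
    and weights: "2 \<le> p" "2 \<le> q" "2 \<le> r" "6 < p + q + r" "n \<le> p + q + r"
    unfolding heavy_triangle_def by blast
  consider "q \<le> p" "q \<le> r" | "r \<le> p" "r \<le> q" | "p \<le> q" "p \<le> r"
    by linarith
  then show thesis
  proof cases
    case 1
    then show thesis using that V tri weights by simp
  next
    case 2
    then show thesis using that[OF V(2,3,1) cyclic_triangle_rotate[OF tri]] weights by simp
  next
    case 3
    then show thesis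
      using that[OF V(3,1,2) cyclic_triangle_rotate[OF cyclic_triangle_rotate[OF tri]]] weights
      by simp
  qed
qed

lemma twice_lightest_weight_lt_product:
  fixes p q r :: nat
  assumes "2 \<le> q" "q \<le> p" "q \<le> r" "6 < p + q + r"
  shows "2 * q < r * p"
proof (rule ccontr)
  assume "\<not> 2 * q < r * p"
  then have "r * p \<le> 2 * p" "r * p \<le> 2 * r" using assms by linarith+
  then have "r = 2" "p = 2" using assms by simp_all
  then show False using assms by linarith
qed

lemma heavy_triangle_mutate:
  assumes "heavy_triangle V c n"
  shows "\<exists>k\<in>V. heavy_triangle V (mutate k c) (Suc n)"
proof -
  obtain u v w p q r where V: "u \<in> V" "v \<in> V" "w \<in> V"
    and tri: "cyclic_triangle c u v w p q r"
    and weights: "2 \<le> q" "q \<le> p" "q \<le> r" "6 < p + q + r" "n \<le> p + q + r"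
    using heavy_triangle_lightest_middle[OF assms] .
  have gain: "2 * q < r * p" using twice_lightest_weight_lt_product weights by blast
  have "cyclic_triangle (mutate u c) u w v r (r * p - q) p"
    using mutate_cyclic_triangle[OF tri] gain by simp
  then have "heavy_triangle V (mutate u c) (Suc n)"
    by (rule heavy_triangleI) (use V weights gain in linarith)+
  then show ?thesis using V by blast
qed

lemma heavy_triangle_unbounded:
  assumes "c \<in> mut_class V b" and "heavy_triangle V c 0"
  shows "\<exists>c'\<in>mut_class V b. heavy_triangle V c' n"
proof (induction n)
  case 0
  then show ?case using assms by blast
next
  case (Suc n)
  then obtain c' k where "c' \<in> mut_class V b" "k \<in> V" "heavy_triangle V (mutate k c') (Suc n)"
    using heavy_triangle_mutate by blast
  then show ?case by (blast intro: mut_class.step)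
qed

lemma mutation_finite_bounded:
  assumes "finite V" and "mutation_finite V b"
  obtains N where "\<And>c x y. c \<in> mut_class V b \<Longrightarrow> x \<in> V \<Longrightarrow> y \<in> V \<Longrightarrow> c x y \<le> N"
proof -
  obtain S where S: "finite S" "\<forall>c\<in>mut_class V b. \<exists>d\<in>S. graph_iso V d c"
    using assms(2) unfolding mutation_finite_def by blast
  define T where "T = (\<lambda>(d, i, j). d i j) ` (S \<times> V \<times> V)"
  have "finite T" unfolding T_def using S(1) assms(1) by simp
  have "c x y \<le> Max T" if c: "c \<in> mut_class V b" and xy: "x \<in> V" "y \<in> V" for c x y
  proof -
    obtain d f where d: "d \<in> S" "bij_betw f V V" "\<forall>i\<in>V. \<forall>j\<in>V. c (f i) (f j) = d i j"
      using S(2) c unfolding graph_iso_def by blast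
    obtain i j where ij: "i \<in> V" "j \<in> V" "x = f i" "y = f j"
      using d(2) xy unfolding bij_betw_def by blast
    have "c x y \<in> T" unfolding T_def using d(1,3) ij by force
    then show ?thesis using \<open>finite T\<close> by simp
  qed
  then show thesis by (rule that)
qed

lemma heavy_triangle_not_mutation_finite:
  assumes "finite V" and "c \<in> mut_class V b" and "heavy_triangle V c 0"
  shows "\<not> mutation_finite V b"
proof
  assume "mutation_finite V b"
  then obtain N where N: "\<And>c x y. c \<in> mut_class V b \<Longrightarrow> x \<in> V \<Longrightarrow> y \<in> V \<Longrightarrow> c x y \<le> N"
    using mutation_finite_bounded assms(1) by blast
  obtain c' u v w p q r where "c' \<in> mut_class V b" "u \<in> V" "v \<in> V" "w \<in> V"
    "cyclic_triangle c' u v w p q r" "Suc (3 * N) \<le> p + q + r"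
    using heavy_triangle_unbounded[OF assms(2,3)] unfolding heavy_triangle_def by blast
  moreover from this have "p \<le> N" "q \<le> N" "r \<le> N"
    using N unfolding cyclic_triangle_def by blast+
  ultimately show False by linarith
qed

lemma cyclic_triangle_not_mutation_finite:
  assumes "finite V" and "c \<in> mut_class V b"
    and tri: "cyclic_triangle c u v w p q r" and V: "u \<in> V" "v \<in> V" "w \<in> V"
    and weights: "2 \<le> p" "1 \<le> q" "2 \<le> r" "\<not> (p = 2 \<and> q = 2 \<and> r = 2)"
  shows "\<not> mutation_finite V b"
proof (cases "q = 1")
  case True
  have "4 \<le> r * p" using mult_le_mono[OF weights(3,1)] by simp
  then have "q \<le> r * p" using True by linarith
  then have "cyclic_triangle (mutate u c) u w v r (r * p - 1) p"
    using mutate_cyclic_triangle[OF tri] True by simp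
  then have "heavy_triangle V (mutate u c) 0"
    by (rule heavy_triangleI) (use V weights \<open>4 \<le> r * p\<close> in linarith)+
  moreover have "mutate u c \<in> mut_class V b" using assms(2) V(1) by (rule mut_class.step)
  ultimately show ?thesis using heavy_triangle_not_mutation_finite assms(1) by blast
next
  case False
  then have "heavy_triangle V c 0"
    using heavy_triangleI[OF tri V] weights by fastforce
  then show ?thesis using heavy_triangle_not_mutation_finite assms(1,2) by blast
qed

lemma graph_connected_leaves_set:
  assumes "graph_connected V b" and "x \<in> X" and "X \<subseteq> V" and "z \<in> V - X"
  shows "\<exists>x\<in>X. \<exists>y\<in>V - X. 0 < b x y \<or> 0 < b y x"
proof (rule ccontr)
  let ?R = "{(u, w). u \<in> V \<and> w \<in> V \<and> (0 < b u w \<or> 0 < b w u)}"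
  assume "\<not> ?thesis"
  then have "?R `` X \<subseteq> X" by blast
  then have "?R\<^sup>* `` X = X" by (rule Image_closed_trancl)
  moreover have "(x, z) \<in> ?R\<^sup>*" using assms unfolding graph_connected_def by blast
  ultimately show False using assms(2,4) by blast
qed

locale Z3_with_vertex =
  fixes V :: "'v set" and b :: "'v \<Rightarrow> 'v \<Rightarrow> nat" and x1 x2 x3 y :: 'v
  assumes graph: "is_graph V b"
    and Z3: "cyclic_triangle b x1 x2 x3 2 2 2"
    and in_V: "x1 \<in> V" "x2 \<in> V" "x3 \<in> V" "y \<in> V"
    and y_new: "y \<noteq> x1" "y \<noteq> x2" "y \<noteq> x3"
begin

lemma rotate: "Z3_with_vertex V b x2 x3 x1 y"
  using graph cyclic_triangle_rotate[OF Z3] in_V y_new by unfold_locales auto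

lemma finite_V: "finite V"
  using graph unfolding is_graph_def by simp

lemma no_opposite: "i \<in> V \<Longrightarrow> j \<in> V \<Longrightarrow> 0 < b i j \<Longrightarrow> b j i = 0"
  using graph unfolding is_graph_def by (metis less_irrefl)

lemma Z3_arrows:
  "b x1 x2 = 2" "b x2 x3 = 2" "b x3 x1 = 2" "b x2 x1 = 0" "b x3 x2 = 0" "b x1 x3 = 0"
  using Z3 unfolding cyclic_triangle_def by auto

lemma distinct_vertices:
  "x1 \<noteq> x2" "x2 \<noteq> x3" "x3 \<noteq> x1" "x2 \<noteq> x1" "x3 \<noteq> x2" "x1 \<noteq> x3"
  "y \<noteq> x1" "y \<noteq> x2" "y \<noteq> x3" "x1 \<noteq> y" "x2 \<noteq> y" "x3 \<noteq> y"
  using Z3 y_new unfolding cyclic_triangle_def by auto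

lemma infinite_if_y_to_x1_not_x2_to_y:
  assumes "0 < b y x1" and "b x2 y = 0"
  shows "\<not> mutation_finite V b"
proof -
  have "b x1 y = 0" using no_opposite assms(1) in_V by blast
  then have "cyclic_triangle (mutate x1 b) x2 x1 y 2 (b y x1) (b y x2 + 2 * b y x1)"
    using Z3_arrows distinct_vertices assms(2) by (simp add: cyclic_triangle_def mutate_simps)
  moreover have "mutate x1 b \<in> mut_class V b" using in_V by (blast intro: mut_class.intros)
  ultimately show ?thesis
    using cyclic_triangle_not_mutation_finite finite_V in_V assms(1) by fastforce
qed

lemma infinite_if_x1_to_y_not_y_to_x3:
  assumes "0 < b x1 y" and "b y x3 = 0"
  shows "\<not> mutation_finite V b"
proof -
  have "b y x1 = 0" using no_opposite assms(1) in_V by blast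
  then have "cyclic_triangle (mutate x1 b) x3 y x1 (b x3 y + 2 * b x1 y) (b x1 y) 2"
    using Z3_arrows distinct_vertices assms(2) by (simp add: cyclic_triangle_def mutate_simps)
  moreover have "mutate x1 b \<in> mut_class V b" using in_V by (blast intro: mut_class.intros)
  ultimately show ?thesis
    using cyclic_triangle_not_mutation_finite finite_V in_V assms(1) by fastforce
qed

lemma infinite_if_heavy_cycle_y_x1_x2:
  assumes "0 < b y x1" and "0 < b x2 y"
    and "\<not> (b y x1 = 1 \<and> b x2 y = 1)" and "\<not> (b y x1 = 2 \<and> b x2 y = 2)"
  shows "\<not> mutation_finite V b"
proof -
  have "b x1 y = 0" "b y x2 = 0" using no_opposite assms(1,2) in_V by blast+
  then have tri: "cyclic_triangle b y x1 x2 (b y x1) 2 (b x2 y)"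
    using Z3_arrows distinct_vertices by (simp add: cyclic_triangle_def)
  note not_mutation_finite = cyclic_triangle_not_mutation_finite[OF finite_V mut_class.refl]
  show ?thesis
  proof (cases "b y x1 = 1")
    case True
    then show ?thesis
      using not_mutation_finite[OF cyclic_triangle_rotate[OF cyclic_triangle_rotate[OF tri]]]
        in_V assms by fastforce
  next
    case False
    then show ?thesis
      using not_mutation_finite[OF cyclic_triangle_rotate[OF tri]] in_V assms by fastforce
  qed
qed

lemma infinite_if_simple_cycle_y_x1_x2:
  assumes "b y x1 = 1" and "b x2 y = 1" and "b y x3 = 0" and "b x3 y = 0"
  shows "\<not> mutation_finite V b"
proof -
  have "b x1 y = 0" "b y x2 = 0" using no_opposite assms(1,2) in_V by simp_all
  then have "cyclic_triangle (mutate y b) x3 x1 x2 2 1 2"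
    using Z3_arrows distinct_vertices assms by (simp add: cyclic_triangle_def mutate_simps)
  moreover have "mutate y b \<in> mut_class V b" using in_V by (blast intro: mut_class.intros)
  ultimately show ?thesis
    using cyclic_triangle_not_mutation_finite finite_V in_V by fastforce
qed

lemma infinite_if_double_cycle_y_x1_x2:
  assumes "b y x1 = 2" and "b x2 y = 2" and "b y x3 = 0" and "b x3 y = 0"
  shows "\<not> mutation_finite V b"
proof -
  have "b x1 y = 0" "b y x2 = 0" using no_opposite assms(1,2) in_V by simp_all
  define c where "c = mutate x3 b"
  have c: "c y x1 = 2" "c x1 x3 = 2" "c x3 x2 = 2" "c x2 x1 = 2" "c x2 y = 2"
    "c x1 y = 0" "c x3 x1 = 0" "c x2 x3 = 0" "c x1 x2 = 0" "c y x2 = 0" "c y x3 = 0" "c x3 y = 0"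
    unfolding c_def using Z3_arrows distinct_vertices assms \<open>b x1 y = 0\<close> \<open>b y x2 = 0\<close>
    by (simp_all add: mutate_simps)
  have "cyclic_triangle (mutate x1 c) y x3 x1 4 2 2"
    using c Z3_arrows distinct_vertices by (simp add: cyclic_triangle_def mutate_simps)
  moreover have "mutate x1 c \<in> mut_class V b"
    unfolding c_def using in_V by (blast intro: mut_class.intros)
  ultimately show ?thesis
    using cyclic_triangle_not_mutation_finite finite_V in_V by fastforce
qed

lemma infinite_if_cycle_y_x1_x2:
  assumes "0 < b y x1" and "0 < b x2 y"
  shows "\<not> mutation_finite V b"
proof -
  interpret rotated: Z3_with_vertex V b x3 x1 x2 y
    using Z3_with_vertex.rotate[OF rotate] .
  have "b x1 y = 0" "b y x2 = 0" using no_opposite assms in_V by blast+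
  consider "0 < b y x3" | "0 < b x3 y" | "b y x3 = 0" "b x3 y = 0"
    by linarith
  then show ?thesis
  proof cases
    case 1
    then show ?thesis using \<open>b x1 y = 0\<close> by (rule rotated.infinite_if_y_to_x1_not_x2_to_y)
  next
    case 2
    then show ?thesis using \<open>b y x2 = 0\<close> by (rule rotated.infinite_if_x1_to_y_not_y_to_x3)
  next
    case 3
    consider "b y x1 = 1" "b x2 y = 1" | "b y x1 = 2" "b x2 y = 2"
      | "\<not> (b y x1 = 1 \<and> b x2 y = 1)" "\<not> (b y x1 = 2 \<and> b x2 y = 2)"
      by blast
    then show ?thesis
    proof cases
      case 1
      then show ?thesis using infinite_if_simple_cycle_y_x1_x2 3 by simp
    next
      case 2
      then show ?thesis using infinite_if_double_cycle_y_x1_x2 3 by simp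
    next
      case 3
      then show ?thesis using infinite_if_heavy_cycle_y_x1_x2 assms by simp
    qed
  qed
qed

lemma infinite_if_adjacent_x1:
  assumes "0 < b y x1 \<or> 0 < b x1 y"
  shows "\<not> mutation_finite V b"
proof -
  interpret rotated: Z3_with_vertex V b x3 x1 x2 y
    using Z3_with_vertex.rotate[OF rotate] .
  consider "0 < b y x1" "b x2 y = 0" | "0 < b y x1" "0 < b x2 y"
    | "0 < b x1 y" "b y x3 = 0" | "0 < b x1 y" "0 < b y x3"
    using assms by auto
  then show ?thesis
  proof cases
    case 1
    then show ?thesis by (rule infinite_if_y_to_x1_not_x2_to_y)
  next
    case 2
    then show ?thesis by (rule infinite_if_cycle_y_x1_x2)
  next
    case 3
    then show ?thesis by (rule infinite_if_x1_to_y_not_y_to_x3)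
  next
    case 4
    then show ?thesis by (intro rotated.infinite_if_cycle_y_x1_x2)
  qed
qed

lemma infinite_if_adjacent:
  assumes "x \<in> {x1, x2, x3}" and "0 < b x y \<or> 0 < b y x"
  shows "\<not> mutation_finite V b"
proof -
  interpret rotated: Z3_with_vertex V b x2 x3 x1 y by (rule rotate)
  interpret rotated2: Z3_with_vertex V b x3 x1 x2 y by (rule rotated.rotate)
  from assms(1) consider "x = x1" | "x = x2" | "x = x3" by blast
  then show ?thesis
  proof cases
    case 1
    then show ?thesis using assms(2) infinite_if_adjacent_x1 by auto
  next
    case 2
    then show ?thesis using assms(2) rotated.infinite_if_adjacent_x1 by auto
  next
    case 3
    then show ?thesis using assms(2) rotated2.infinite_if_adjacent_x1 by auto
  qed
qed

end

theorem lemma6: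
  fixes V :: "'v set" and b :: "'v \<Rightarrow> 'v \<Rightarrow> nat"
  assumes "is_graph V b" and "mutation_finite V b" and "graph_connected V b"
    and "card V \<ge> 4"
  shows "\<not> contains_Z3 V b"
proof
  assume "contains_Z3 V b"
  then obtain x1 x2 x3 where in_V: "x1 \<in> V" "x2 \<in> V" "x3 \<in> V"
    and Z3: "cyclic_triangle b x1 x2 x3 2 2 2"
    unfolding contains_Z3_def cyclic_triangle_def by blast
  have "\<not> V \<subseteq> {x1, x2, x3}"
  proof
    assume "V \<subseteq> {x1, x2, x3}"
    then have "card V \<le> card {x1, x2, x3}" by (intro card_mono) auto
    also have "\<dots> \<le> 3" by (simp add: card_insert_if)
    finally show False using assms(4) by simp
  qed
  then obtain x y where adjacent:
      "x \<in> {x1, x2, x3}" "y \<in> V - {x1, x2, x3}" "0 < b x y \<or> 0 < b y x"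
    using graph_connected_leaves_set[OF assms(3), of x1 "{x1, x2, x3}"] in_V by blast
  interpret Z3_with_vertex V b x1 x2 x3 y
    using assms(1) Z3 in_V adjacent(2) by unfold_locales auto
  show False using infinite_if_adjacent[OF adjacent(1,3)] assms(2) by contradiction
qed

end
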